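(* In the setting of the two-agent SIS epidemic on a finite connected edge-transitive graph $G$ with walking rate $\lambda>0$ and recovery rate $\gamma>0$ (both agents initially infected at the same vertex), let $N$ be the total number of jumps (of both walkers combined) until the two walkers first occupy the same vertex, when started at the two endpoints of an edge. Then for every $s>0$, \[ \mathcal L_T(s)=\frac{2\gamma\left(\dfrac{1-\mathbb E\Big[\big(\tfrac{2\lambda}{2\lambda+s+\gamma}\big)^N\Big]}{s+\gamma}-\dfrac{1-\mathbb E\Big[\big(\tfrac{2\lambda}{2\lambda+s+2\gamma}\big)^N\Big]}{s+2\gamma}\right)}{\dfrac{2\lambda+s}{2\lambda}-2\,\mathbb E\Big[\big(\tfrac{2\lambda}{2\lambda+s+\gamma}\big)^N\Big]+\mathbb E\Big[\big(\tfrac{2\lambda}{2\lambda+s+2\gamma}\big)^N\Big]}, \] where $\mathcal L_T(s)=\mathbb E(e^{-sT})$.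
   Context: Model. $G=(V,E)$ is a finite, connected, undirected graph which is edge-transitive: for any two edges $e_1,e_2\in E$ there is a graph automorphism mapping $e_1$ to $e_2$. Two agents move on $V$ according to independent continuous-time simple random walks: each agent stays at its current vertex for an $\mathrm{Exp}(\lambda)$ holding time, then jumps to a uniformly chosen neighbour. Each agent has a state in $\{S,I\}$. Whenever the two agents occupy the same vertex and at least one is infected, both are infected immediately. Each infected agent independently recovers (returns to $S$) after an $\mathrm{Exp}(\gamma)$ time. Initially both agents are infected and at the same vertex. $T=\inf\{t\ge0:\text{both agents are in state } S\}$ is the end of epidemic time. By edge-transitivity the distribution of $N$ does not depend on the chosen edge; $N$ depends only on $G$. *)

theory Defs
  imports "HOL-Probability.Probability"
begin

definition simple_graph :: "('v \<Rightarrow> 'v \<Rightarrow> bool) \<Rightarrow> bool" where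
  "simple_graph Adj \<longleftrightarrow> (\<forall>x y. Adj x y \<longrightarrow> Adj y x) \<and> (\<forall>x. \<not> Adj x x)"

definition graph_connected :: "('v \<Rightarrow> 'v \<Rightarrow> bool) \<Rightarrow> bool" where
  "graph_connected Adj \<longleftrightarrow> (\<forall>x y. Adj\<^sup>*\<^sup>* x y)"

definition graph_automorphism :: "('v \<Rightarrow> 'v \<Rightarrow> bool) \<Rightarrow> ('v \<Rightarrow> 'v) \<Rightarrow> bool" where
  "graph_automorphism Adj \<sigma> \<longleftrightarrow> bij \<sigma> \<and> (\<forall>x y. Adj (\<sigma> x) (\<sigma> y) \<longleftrightarrow> Adj x y)"

definition edge_transitive :: "('v \<Rightarrow> 'v \<Rightarrow> bool) \<Rightarrow> bool" where
  "edge_transitive Adj \<longleftrightarrow>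
     (\<forall>a b c d. Adj a b \<longrightarrow> Adj c d \<longrightarrow>
        (\<exists>\<sigma>. graph_automorphism Adj \<sigma> \<and> {\<sigma> a, \<sigma> b} = {c, d}))"

definition nbrs :: "('v \<Rightarrow> 'v \<Rightarrow> bool) \<Rightarrow> 'v \<Rightarrow> 'v set" where
  "nbrs Adj x = {y. Adj x y}"

definition deg :: "('v \<Rightarrow> 'v \<Rightarrow> bool) \<Rightarrow> 'v \<Rightarrow> nat" where
  "deg Adj x = card (nbrs Adj x)"

definition exp1 :: "real measure" where
  "exp1 = density lborel (exponential_density 1)"

text \<open>Driving randomness: at each step n of the jump chain, an independent Exp(1) clock
  for every potential target state y.\<close>
definition clock_space :: "(nat \<Rightarrow> 's \<Rightarrow> real) measure" where
  "clock_space = PiM UNIV (\<lambda>_. PiM UNIV (\<lambda>_. exp1))"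

text \<open>r x y = jump rate from x to y (y \<noteq> x).\<close>
definition active :: "('s \<Rightarrow> 's \<Rightarrow> real) \<Rightarrow> 's \<Rightarrow> 's set" where
  "active r x = {y. y \<noteq> x \<and> 0 < r x y}"

text \<open>Clock for target y rings at time e y / r x y (Exp(r x y)); holding time is the
  minimum, the next state the minimiser.\<close>
definition hold :: "('s \<Rightarrow> 's \<Rightarrow> real) \<Rightarrow> 's \<Rightarrow> ('s \<Rightarrow> real) \<Rightarrow> real" where
  "hold r x e = Min ((\<lambda>y. e y / r x y) ` active r x)"

definition next_state :: "('s \<Rightarrow> 's \<Rightarrow> real) \<Rightarrow> 's \<Rightarrow> ('s \<Rightarrow> real) \<Rightarrow> 's" where
  "next_state r x e = (if active r x = {} then x else arg_min_on (\<lambda>y. e y / r x y) (active r x))"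

primrec jump_chain :: "('s \<Rightarrow> 's \<Rightarrow> real) \<Rightarrow> 's \<Rightarrow> (nat \<Rightarrow> 's \<Rightarrow> real) \<Rightarrow> nat \<Rightarrow> 's" where
  "jump_chain r x0 \<omega> 0 = x0"
| "jump_chain r x0 \<omega> (Suc n) = next_state r (jump_chain r x0 \<omega> n) (\<omega> n)"

text \<open>Time of the n-th jump; the process equals jump_chain n on [jump_time n, jump_time (n+1)).\<close>
definition jump_time :: "('s \<Rightarrow> 's \<Rightarrow> real) \<Rightarrow> 's \<Rightarrow> (nat \<Rightarrow> 's \<Rightarrow> real) \<Rightarrow> nat \<Rightarrow> real" where
  "jump_time r x0 \<omega> n = (\<Sum>k<n. hold r (jump_chain r x0 \<omega> k) (\<omega> k))"

definition hits :: "('s \<Rightarrow> 's \<Rightarrow> real) \<Rightarrow> 's \<Rightarrow> 's set \<Rightarrow> (nat \<Rightarrow> 's \<Rightarrow> real) \<Rightarrow> bool" where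
  "hits r x0 A \<omega> \<longleftrightarrow> (\<exists>n. jump_chain r x0 \<omega> n \<in> A)"

definition hit_index :: "('s \<Rightarrow> 's \<Rightarrow> real) \<Rightarrow> 's \<Rightarrow> 's set \<Rightarrow> (nat \<Rightarrow> 's \<Rightarrow> real) \<Rightarrow> nat" where
  "hit_index r x0 A \<omega> = (LEAST n. jump_chain r x0 \<omega> n \<in> A)"

text \<open>First time the process is in A (only meaningful when hits).\<close>
definition hit_time :: "('s \<Rightarrow> 's \<Rightarrow> real) \<Rightarrow> 's \<Rightarrow> 's set \<Rightarrow> (nat \<Rightarrow> 's \<Rightarrow> real) \<Rightarrow> real" where
  "hit_time r x0 A \<omega> = jump_time r x0 \<omega> (hit_index r x0 A \<omega>)"

text \<open>Laplace transform E[exp(-s T_A)], with exp(-s \<infinity>) = 0.\<close>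
definition hit_laplace :: "('s \<Rightarrow> 's \<Rightarrow> real) \<Rightarrow> 's \<Rightarrow> 's set \<Rightarrow> real \<Rightarrow> real" where
  "hit_laplace r x0 A s =
     (\<integral>\<omega>. (if hits r x0 A \<omega> then exp (- s * hit_time r x0 A \<omega>) else 0) \<partial>clock_space)"

text \<open>Probability generating function E[z^N_A] of the number of jumps until hitting A
  (z^\<infinity> = 0).\<close>
definition hit_pgf :: "('s \<Rightarrow> 's \<Rightarrow> real) \<Rightarrow> 's \<Rightarrow> 's set \<Rightarrow> real \<Rightarrow> real" where
  "hit_pgf r x0 A z =
     (\<integral>\<omega>. (if hits r x0 A \<omega> then z ^ hit_index r x0 A \<omega> else 0) \<partial>clock_space)"

text \<open>Two independent continuous-time simple random walks, each with jump rate lam: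
  state (p1, p2); walker a jumps to each neighbour at rate lam / deg.\<close>
definition walk_rate :: "('v \<Rightarrow> 'v \<Rightarrow> bool) \<Rightarrow> real \<Rightarrow> 'v \<times> 'v \<Rightarrow> 'v \<times> 'v \<Rightarrow> real" where
  "walk_rate Adj lam x y =
     (case x of (p1, p2) \<Rightarrow>
        (\<Sum>w\<in>nbrs Adj p1. if y = (w, p2) then lam / real (deg Adj p1) else 0)
      + (\<Sum>w\<in>nbrs Adj p2. if y = (p1, w) then lam / real (deg Adj p2) else 0))"

definition meet_set :: "('v \<times> 'v) set" where
  "meet_set = {(p1, p2). p1 = p2}"

definition meet_pgf :: "('v \<Rightarrow> 'v \<Rightarrow> bool) \<Rightarrow> real \<Rightarrow> 'v \<Rightarrow> 'v \<Rightarrow> real \<Rightarrow> real" where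
  "meet_pgf Adj lam u v z = hit_pgf (walk_rate Adj lam) (u, v) meet_set z"

text \<open>State (p1, p2, i1, i2): positions and infection flags (True = I).
  After any transition the contact rule is applied: if the agents share a vertex and
  at least one is infected, both are infected.\<close>
definition contact :: "'v \<times> 'v \<times> bool \<times> bool \<Rightarrow> 'v \<times> 'v \<times> bool \<times> bool" where
  "contact x = (case x of (p1, p2, i1, i2) \<Rightarrow>
     (if p1 = p2 \<and> (i1 \<or> i2) then (p1, p2, True, True) else (p1, p2, i1, i2)))"

definition sis_rate :: "('v \<Rightarrow> 'v \<Rightarrow> bool) \<Rightarrow> real \<Rightarrow> real \<Rightarrow>
    'v \<times> 'v \<times> bool \<times> bool \<Rightarrow> 'v \<times> 'v \<times> bool \<times> bool \<Rightarrow> real" where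
  "sis_rate Adj lam gam x y =
     (case x of (p1, p2, i1, i2) \<Rightarrow>
        (\<Sum>w\<in>nbrs Adj p1. if y = contact (w, p2, i1, i2) then lam / real (deg Adj p1) else 0)
      + (\<Sum>w\<in>nbrs Adj p2. if y = contact (p1, w, i1, i2) then lam / real (deg Adj p2) else 0)
      + (if i1 \<and> y = contact (p1, p2, False, i2) then gam else 0)
      + (if i2 \<and> y = contact (p1, p2, i1, False) then gam else 0))"

definition all_susceptible :: "('v \<times> 'v \<times> bool \<times> bool) set" where
  "all_susceptible = {(p1, p2, i1, i2). \<not> i1 \<and> \<not> i2}"

definition sis_laplace :: "('v \<Rightarrow> 'v \<Rightarrow> bool) \<Rightarrow> real \<Rightarrow> real \<Rightarrow> 'v \<Rightarrow> real \<Rightarrow> real" where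
  "sis_laplace Adj lam gam x0 s = hit_laplace (sis_rate Adj lam gam) (x0, x0, True, True) all_susceptible s"

end

theory Submission
  imports Defs
begin

text \<open>
  Conditioning on the first row of clocks, the holding time and the next state of the chain satisfy
  \<open>E[exp (- s * hold); next = y] = r x y / (q x + s)\<close>, with \<open>q x\<close> the total exit rate. Hence both
  the Laplace transform of a hitting time and the generating function of the number of jumps
  before hitting satisfy linear first-step equations, and such a system has at most one solution:
  where the difference of two solutions is maximal the equation contracts it.

  Uniqueness makes the meeting generating function \<open>g\<^sub>z\<close> of the two walkers invariant under
  swapping the walkers and under graph automorphisms, so by edge-transitivity it takes one value
  on all edges. For the epidemic one guesses the answer: with \<open>z\<^sub>1 = 2\<lambda>/(2\<lambda>+s+\<gamma>)\<close>,
  \<open>z\<^sub>2 = 2\<lambda>/(2\<lambda>+s+2\<gamma>)\<close> and \<open>L\<close> the claimed value, take an affine combination of \<open>g\<^sub>z\<^sub>1\<close> and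
  \<open>g\<^sub>z\<^sub>2\<close> when both agents are infected, one of \<open>g\<^sub>z\<^sub>1\<close> when one is, and \<open>1\<close> when none is.
  Since \<open>g\<^sub>z\<close> is harmonic for the walk killed at rate \<open>(1 - z)/z \<cdot> 2\<lambda>\<close>, the guess satisfies the
  first-step equation off the diagonal. On the diagonal every neighbouring position pair is an
  edge, so there the equation collapses to one linear equation in \<open>L\<close>, solved by the claimed
  formula. Uniqueness identifies the guess with the Laplace transform.
\<close>

section \<open>Exponential clocks\<close>

lemma prob_space_exp1: "prob_space exp1"
  unfolding exp1_def by (rule prob_space_exponential_density) simp

lemma sets_exp1[simp, measurable_cong]: "sets exp1 = sets borel"
  unfolding exp1_def by simp

lemma space_exp1[simp]: "space exp1 = UNIV"
  unfolding exp1_def by simp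

lemma AE_exp1_nonneg: "AE x in exp1. 0 \<le> x"
  unfolding exp1_def
  by (rule AE_density[THEN iffD2]) (auto simp: exponential_density_def)

lemma AE_exp1_neq: "AE x in exp1. x \<noteq> c"
  unfolding exp1_def
  by (rule AE_density[THEN iffD2], simp) (use AE_lborel_singleton[of c] in eventually_elim, auto)

lemma nn_integral_exp1_exp:
  assumes "c \<ge> 0"
  shows "(\<integral>\<^sup>+x. ennreal (exp (- c * x)) \<partial>exp1) = ennreal (1 / (1 + c))"
proof -
  have "(\<integral>\<^sup>+x. ennreal (exp (- c * x)) \<partial>exp1)
      = (\<integral>\<^sup>+x. ennreal (exponential_density 1 x) * ennreal (exp (- c * x)) \<partial>lborel)"
    unfolding exp1_def by (subst nn_integral_density) auto
  also have "\<dots> = (\<integral>\<^sup>+x. ennreal (1 / (1 + c)) * ennreal (exponential_density (1 + c) x) \<partial>lborel)"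
  proof (intro nn_integral_cong)
    fix x :: real
    have "exp (- x) * exp (- c * x) = 1 / (1 + c) * ((1 + c) * exp (- x * (1 + c)))"
      using assms by (simp add: exp_add[symmetric] field_simps)
    then show "ennreal (exponential_density 1 x) * ennreal (exp (- c * x))
             = ennreal (1 / (1 + c)) * ennreal (exponential_density (1 + c) x)"
      using assms
      by (auto simp: exponential_density_def ennreal_mult'[symmetric] ennreal_mult[symmetric])
  qed
  also have "\<dots> = ennreal (1 / (1 + c)) * emeasure (density lborel (exponential_density (1 + c))) UNIV"
    by (subst nn_integral_cmult) (simp_all add: emeasure_density)
  also have "emeasure (density lborel (exponential_density (1 + c))) UNIV = 1"
    using prob_space.emeasure_space_1[OF prob_space_exponential_density, of "1 + c"] assms by simp
  finally show ?thesis by simp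
qed

lemma emeasure_exp1_greaterThan:
  assumes "a \<ge> 0"
  shows "emeasure exp1 {a<..} = ennreal (exp (- a))"
proof -
  interpret prob_space exp1 by (rule prob_space_exp1)
  have "distributed exp1 lborel (\<lambda>x. x) (exponential_density 1)"
    unfolding distributed_def exp1_def by (auto simp: distr_id2)
  from exponential_distributedD_gt[OF this assms] have "prob {a<..} = exp (- a)"
    by (simp add: Collect_conv_if greaterThan_def)
  then show ?thesis by (simp add: emeasure_eq_measure)
qed

lemma AE_PiM_exp1_avoid:
  assumes "finite B" and "B \<subseteq> I"
  shows "AE x in PiM I (\<lambda>_. exp1). \<forall>z\<in>B. x z \<noteq> c z"
  using assms(1)
proof (rule eventually_ball_finite, intro ballI)
  fix z assume "z \<in> B"
  with assms(2) show "AE x in PiM I (\<lambda>_. exp1). x z \<noteq> c z"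
    by (intro AE_PiM_component[where P = "\<lambda>u. u \<noteq> c z"]) (auto simp: prob_space_exp1 AE_exp1_neq)
qed

lemma nn_integral_PiM_exp1_all_greater:
  fixes c :: "'s \<Rightarrow> real"
  assumes "finite I" and "B \<subseteq> I" and "\<And>z. z \<in> B \<Longrightarrow> 0 \<le> c z"
  shows "(\<integral>\<^sup>+x. indicator {x. \<forall>z\<in>B. c z < x z} x \<partial>PiM I (\<lambda>_. exp1))
         = ennreal (exp (- (\<Sum>z\<in>B. c z)))"
proof -
  interpret product_sigma_finite "\<lambda>_::'s. exp1"
    by (simp add: product_sigma_finite_def prob_space_imp_sigma_finite prob_space_exp1)
  define G where "G z u = (if z \<in> B then indicator {c z<..} u else 1::ennreal)" for z u
  have "(\<integral>\<^sup>+x. indicator {x. \<forall>z\<in>B. c z < x z} x \<partial>PiM I (\<lambda>_. exp1))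
      = (\<integral>\<^sup>+x. (\<Prod>z\<in>I. G z (x z)) \<partial>PiM I (\<lambda>_. exp1))"
  proof (rule nn_integral_cong)
    fix x :: "'s \<Rightarrow> real"
    show "indicator {x. \<forall>z\<in>B. c z < x z} x = (\<Prod>z\<in>I. G z (x z))"
    proof (cases "\<forall>z\<in>B. c z < x z")
      case True
      then have "G z (x z) = 1" if "z \<in> I" for z
        by (simp add: G_def)
      with True show ?thesis by simp
    next
      case False
      then obtain z where "z \<in> B" "\<not> c z < x z" by blast
      with assms(1,2) False show ?thesis
        by (subst prod_zero) (auto simp: G_def intro!: bexI[of _ z])
    qed
  qed
  also have "\<dots> = (\<Prod>z\<in>I. \<integral>\<^sup>+u. G z u \<partial>exp1)"
    using assms(1) by (intro product_nn_integral_prod) (auto simp: G_def)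
  also have "\<dots> = (\<Prod>z\<in>I. ennreal (if z \<in> B then exp (- c z) else 1))"
    using prob_space.emeasure_space_1[OF prob_space_exp1]
    by (intro prod.cong refl) (auto simp: G_def emeasure_exp1_greaterThan assms(3))
  also have "\<dots> = ennreal (\<Prod>z\<in>I. if z \<in> B then exp (- c z) else 1)"
    by (rule prod_ennreal) simp
  also have "(\<Prod>z\<in>I. if z \<in> B then exp (- c z) else 1) = (\<Prod>z\<in>B. exp (- c z))"
    using assms(1,2) by (simp add: prod.If_cases Int_absorb1)
  also have "\<dots> = exp (- (\<Sum>z\<in>B. c z))"
    using finite_subset[OF assms(2,1)] by (simp add: exp_sum[symmetric] sum_negf)
  finally show ?thesis .
qed

abbreviation step_clocks :: "('s \<Rightarrow> real) measure" where
  "step_clocks \<equiv> PiM UNIV (\<lambda>_. exp1)"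

lemma prob_space_step_clocks: "prob_space step_clocks"
  by (intro prob_space_PiM prob_space_exp1)

lemma prob_space_clock_space: "prob_space clock_space"
  unfolding clock_space_def by (intro prob_space_PiM prob_space_step_clocks)

lemma AE_step_clocks_nonneg: "AE e in (step_clocks :: ('s::finite \<Rightarrow> real) measure). \<forall>z. 0 \<le> e z"
  unfolding AE_all_countable
  by (intro allI AE_PiM_component[where P = "\<lambda>u. 0 \<le> u"]) (auto simp: prob_space_exp1 AE_exp1_nonneg)

lemma AE_clock_space_nonneg: "AE \<omega> in clock_space. \<forall>n (z::'s::finite). 0 \<le> \<omega> n z"
proof -
  have "AE \<omega> in clock_space. \<forall>z::'s. 0 \<le> \<omega> n z" for n
    unfolding clock_space_def
    by (rule AE_PiM_component[where P = "\<lambda>e. \<forall>z::'s. 0 \<le> e z"])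
       (auto simp: prob_space_step_clocks AE_step_clocks_nonneg)
  then show ?thesis by (simp add: AE_all_countable)
qed

section \<open>One step of the chain\<close>

lemma measurable_next_state[measurable]:
  fixes r :: "'s::finite \<Rightarrow> 's \<Rightarrow> real"
  shows "next_state r x \<in> measurable step_clocks (count_space UNIV)"
proof (cases "active r x = {}")
  case True
  then show ?thesis unfolding next_state_def by simp
next
  case False
  let ?P = "\<lambda>e y. y \<in> active r x \<and> \<not> (\<exists>z. z \<in> active r x \<and> e z / r x z < e y / r x y)"
  have "?P \<in> measurable step_clocks (count_space UNIV)"
  proof (subst measurable_count_space_eq2_countable, safe)
    fix p :: "'s \<Rightarrow> bool"
    have "?P -` {p} \<inter> space step_clocks = {e \<in> space step_clocks. \<forall>y.
            (y \<in> active r x \<and> \<not> (\<exists>z\<in>active r x. e z / r x z < e y / r x y)) = p y}"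
      by (rule set_eqI) (simp add: fun_eq_iff Bex_def conj_commute)
    also have "\<dots> \<in> sets step_clocks" by measurable
    finally show "?P -` {p} \<inter> space step_clocks \<in> sets step_clocks" .
  qed auto
  then have "(\<lambda>e. Eps (?P e)) \<in> measurable step_clocks (count_space UNIV)"
    by (rule measurable_compose) simp
  moreover have "next_state r x = (\<lambda>e. Eps (?P e))"
    using False
    by (simp add: fun_eq_iff next_state_def arg_min_on_def arg_min_def is_arg_min_def)
  ultimately show ?thesis by simp
qed

lemma measurable_hold[measurable]:
  fixes r :: "'s::finite \<Rightarrow> 's \<Rightarrow> real"
  shows "hold r x \<in> borel_measurable step_clocks"
  unfolding hold_def[abs_def] by measurable

lemma next_state_in_active:
  fixes r :: "'s::finite \<Rightarrow> 's \<Rightarrow> real"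
  assumes "active r x \<noteq> {}"
  shows "next_state r x e \<in> active r x"
  using assms arg_min_if_finite(1)[of "active r x"] unfolding next_state_def by simp

lemma hold_nonneg:
  fixes r :: "'s::finite \<Rightarrow> 's \<Rightarrow> real"
  assumes "\<forall>z. 0 \<le> e z" and "active r x \<noteq> {}"
  shows "0 \<le> hold r x e"
  unfolding hold_def using assms
  by (subst Min_ge_iff) (auto simp: active_def intro!: divide_nonneg_pos)

lemma next_state_eq_iff:
  fixes r :: "'s::finite \<Rightarrow> 's \<Rightarrow> real"
  assumes y: "y \<in> active r x"
    and no_tie: "\<forall>z\<in>active r x - {y}. e z / r x z \<noteq> e y / r x y"
  shows "next_state r x e = y \<longleftrightarrow> (\<forall>z\<in>active r x - {y}. e y / r x y < e z / r x z)"
proof -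
  let ?A = "active r x" and ?f = "\<lambda>z. e z / r x z"
  have ne: "?A \<noteq> {}" using y by auto
  have next_eq: "next_state r x e = arg_min_on ?f ?A" using ne unfolding next_state_def by simp
  have fin: "finite ?A" by simp
  note am = arg_min_if_finite[OF fin ne, of ?f]
  show ?thesis
  proof
    assume "next_state r x e = y"
    then have "\<forall>z\<in>?A. \<not> ?f z < ?f y" using am next_eq by auto
    then show "\<forall>z\<in>?A - {y}. ?f y < ?f z" using no_tie by force
  next
    assume H: "\<forall>z\<in>?A - {y}. ?f y < ?f z"
    show "next_state r x e = y"
    proof (rule ccontr)
      assume "next_state r x e \<noteq> y"
      then have "?f y < ?f (arg_min_on ?f ?A)" using H am next_eq by auto
      then show False using am y by auto
    qed
  qed
qed

lemma hold_eq_of_next_state: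
  fixes r :: "'s::finite \<Rightarrow> 's \<Rightarrow> real"
  assumes "y \<in> active r x" and "\<forall>z\<in>active r x - {y}. e z / r x z \<noteq> e y / r x y"
    and "next_state r x e = y"
  shows "hold r x e = e y / r x y"
proof -
  let ?A = "active r x" and ?f = "\<lambda>z. e z / r x z"
  have less: "\<forall>z\<in>?A - {y}. ?f y < ?f z" using next_state_eq_iff[OF assms(1,2)] assms(3) by simp
  have "Min (?f ` ?A) = ?f y"
  proof (rule Min_eqI)
    show "?f y \<in> ?f ` ?A" using assms(1) by blast
    fix w assume "w \<in> ?f ` ?A"
    then obtain z where "z \<in> ?A" "w = ?f z" by blast
    then show "?f y \<le> w" using less by (cases "z = y") (auto intro: less_imp_le)
  qed simp
  then show ?thesis unfolding hold_def by simp
qed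

lemma hold_next_state_fixed_clock:
  fixes r :: "'s::finite \<Rightarrow> 's \<Rightarrow> real"
  assumes y: "y \<in> active r x" and no_tie: "\<forall>z\<in>active r x - {y}. x' z \<noteq> r x z * t / r x y"
  shows "ennreal (exp (- s * hold r x (x'(y := t)))) * indicator {e. next_state r x e = y} (x'(y := t))
         = ennreal (exp (- s * (t / r x y))) * indicator {x'. \<forall>z\<in>active r x - {y}. r x z * t / r x y < x' z} x'"
proof -
  define e where "e = x'(y := t)"
  have pos: "0 < r x z" if "z \<in> active r x" for z using that by (simp add: active_def)
  have cmp: "e y / r x y < e z / r x z \<longleftrightarrow> r x z * t / r x y < x' z"
    and neq: "e z / r x z \<noteq> e y / r x y" if "z \<in> active r x - {y}" for z
    using that pos[of z] pos[OF y] no_tie by (auto simp: e_def field_simps)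
  have "next_state r x e = y \<longleftrightarrow> (\<forall>z\<in>active r x - {y}. r x z * t / r x y < x' z)"
    using next_state_eq_iff[OF y, of e] neq cmp by auto
  moreover have "next_state r x e = y \<Longrightarrow> hold r x e = t / r x y"
    using hold_eq_of_next_state[OF y, of e] neq by (auto simp: e_def)
  ultimately show ?thesis
    by (auto simp: e_def[symmetric] split: split_indicator)
qed

lemma laplace_hold_next_state:
  fixes r :: "'s::finite \<Rightarrow> 's \<Rightarrow> real"
  assumes rnn: "\<And>z. 0 \<le> r x z" and y: "y \<in> active r x" and s: "0 \<le> s"
  shows "(\<integral>\<^sup>+e. ennreal (exp (- s * hold r x e)) * indicator {e. next_state r x e = y} e \<partial>step_clocks)
         = ennreal (r x y / ((\<Sum>z\<in>active r x. r x z) + s))"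
proof -
  interpret product_sigma_finite "\<lambda>_::'s. exp1"
    by (simp add: product_sigma_finite_def prob_space_imp_sigma_finite prob_space_exp1)
  define A where "A = active r x"
  define I where "I = (UNIV - {y} :: 's set)"
  define ry where "ry = r x y"
  define q where "q = (\<Sum>z\<in>A. r x z)"
  define F where "F e = ennreal (exp (- s * hold r x e)) * indicator {e. next_state r x e = y} e" for e
  have ry: "0 < ry" and yA: "y \<in> A" using y by (simp_all add: active_def ry_def A_def)
  have q: "q = ry + (\<Sum>z\<in>A - {y}. r x z)"
    unfolding q_def ry_def using yA by (simp add: sum.remove)
  have UI: "insert y I = UNIV" and yI: "y \<notin> I" by (auto simp: I_def)
  have "(\<integral>\<^sup>+e. F e \<partial>step_clocks) = (\<integral>\<^sup>+t. (\<integral>\<^sup>+x'. F (x'(y := t)) \<partial>PiM I (\<lambda>_. exp1)) \<partial>exp1)"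
    unfolding UI[symmetric]
    by (rule product_nn_integral_insert_rev[OF _ yI]) (simp_all add: UI F_def)
  also have "\<dots> = (\<integral>\<^sup>+t. ennreal (exp (- ((s + q - ry) / ry) * t)) \<partial>exp1)"
    using AE_exp1_nonneg
  proof (intro nn_integral_cong_AE, eventually_elim)
    fix t :: real assume t: "0 \<le> t"
    define c where "c z = r x z * t / ry" for z
    have "AE x' in PiM I (\<lambda>_. exp1). \<forall>z\<in>A - {y}. x' z \<noteq> c z"
      by (rule AE_PiM_exp1_avoid) (auto simp: I_def)
    then have "(\<integral>\<^sup>+x'. F (x'(y := t)) \<partial>PiM I (\<lambda>_. exp1))
        = (\<integral>\<^sup>+x'. ennreal (exp (- s * (t / ry))) * indicator {x'. \<forall>z\<in>A - {y}. c z < x' z} x'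
             \<partial>PiM I (\<lambda>_. exp1))"
    proof (intro nn_integral_cong_AE, eventually_elim)
      fix x' :: "'s \<Rightarrow> real" assume "\<forall>z\<in>A - {y}. x' z \<noteq> c z"
      then show "F (x'(y := t)) = ennreal (exp (- s * (t / ry))) * indicator {x'. \<forall>z\<in>A - {y}. c z < x' z} x'"
        unfolding F_def c_def A_def ry_def by (rule hold_next_state_fixed_clock[OF y])
    qed
    also have "\<dots> = ennreal (exp (- s * (t / ry))) * ennreal (exp (- (\<Sum>z\<in>A - {y}. c z)))"
    proof -
      have "(\<integral>\<^sup>+x'. indicator {x'. \<forall>z\<in>A - {y}. c z < x' z} x' \<partial>PiM I (\<lambda>_. exp1))
          = ennreal (exp (- (\<Sum>z\<in>A - {y}. c z)))"
        using rnn t ry by (intro nn_integral_PiM_exp1_all_greater) (auto simp: I_def c_def)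
      moreover have "Measurable.pred (PiM I (\<lambda>_. exp1)) (\<lambda>x'. \<forall>z\<in>A - {y}. c z < x' z)"
        unfolding I_def by measurable
      ultimately show ?thesis by (subst nn_integral_cmult) auto
    qed
    also have "(\<Sum>z\<in>A - {y}. c z) = (q - ry) / ry * t"
      by (simp add: c_def q sum_divide_distrib[symmetric] sum_distrib_right[symmetric])
    also have "ennreal (exp (- s * (t / ry))) * ennreal (exp (- ((q - ry) / ry * t)))
             = ennreal (exp (- ((s + q - ry) / ry) * t))"
      using ry by (simp add: ennreal_mult[symmetric] exp_add[symmetric] field_simps)
    finally show "(\<integral>\<^sup>+x'. F (x'(y := t)) \<partial>PiM I (\<lambda>_. exp1)) = ennreal (exp (- ((s + q - ry) / ry) * t))" .
  qed
  also have "\<dots> = ennreal (1 / (1 + (s + q - ry) / ry))"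
    using s q ry rnn by (intro nn_integral_exp1_exp) (simp add: sum_nonneg)
  also have "1 / (1 + (s + q - ry) / ry) = ry / (q + s)"
    using ry by (simp add: field_simps)
  finally show ?thesis by (simp add: F_def ry_def q_def A_def)
qed

text \<open>With \<open>\<rho> = r x\<close> and \<open>h = 1\<close> this is the exit rate of \<open>x\<close>.\<close>

definition offdiag_sum :: "'s::finite \<Rightarrow> ('s \<Rightarrow> real) \<Rightarrow> ('s \<Rightarrow> real) \<Rightarrow> real" where
  "offdiag_sum x \<rho> h = (\<Sum>y\<in>UNIV. if y = x then 0 else \<rho> y * h y)"

lemma offdiag_sum_active:
  fixes r :: "'s::finite \<Rightarrow> 's \<Rightarrow> real"
  assumes "\<And>z. 0 \<le> r x z"
  shows "offdiag_sum x (r x) h = (\<Sum>y\<in>active r x. r x y * h y)"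
  unfolding offdiag_sum_def
proof (rule sum.mono_neutral_cong_right)
  show "\<forall>i\<in>UNIV - active r x. (if i = x then 0 else r x i * h i) = 0"
    using assms by (auto simp: active_def) (metis less_eq_real_def)
qed (auto simp: active_def)

lemma offdiag_sum_nonneg:
  "(\<And>y. 0 \<le> \<rho> y) \<Longrightarrow> (\<And>y. 0 \<le> h y) \<Longrightarrow> 0 \<le> offdiag_sum x \<rho> h"
  unfolding offdiag_sum_def by (auto intro!: sum_nonneg)

lemma offdiag_sum_diff:
  "offdiag_sum x \<rho> (\<lambda>y. f y - g y) = offdiag_sum x \<rho> f - offdiag_sum x \<rho> g"
  unfolding offdiag_sum_def by (subst sum_subtractf[symmetric]) (rule sum.cong, auto simp: right_diff_distrib)

lemma active_nonempty_of_offdiag_sum: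
  fixes r :: "'s::finite \<Rightarrow> 's \<Rightarrow> real"
  assumes "\<And>y. 0 \<le> r x y" and "0 < offdiag_sum x (r x) (\<lambda>_. 1)"
  shows "active r x \<noteq> {}"
  using assms by (auto simp: offdiag_sum_active)

lemma nn_integral_hold_next_state:
  fixes r :: "'s::finite \<Rightarrow> 's \<Rightarrow> real"
  assumes rnn: "\<And>z. 0 \<le> r x z" and ne: "active r x \<noteq> {}" and s: "0 \<le> s"
    and h: "\<And>y. 0 \<le> h y"
  shows "(\<integral>\<^sup>+e. ennreal (exp (- s * hold r x e) * h (next_state r x e)) \<partial>step_clocks)
         = ennreal (offdiag_sum x (r x) h / (offdiag_sum x (r x) (\<lambda>_. 1) + s))"
proof -
  let ?A = "active r x"
  let ?q = "\<Sum>z\<in>?A. r x z"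
  let ?D = "\<lambda>y e. ennreal (exp (- s * hold r x e)) * indicator {e. next_state r x e = y} e"
  have "(\<integral>\<^sup>+e. ennreal (exp (- s * hold r x e) * h (next_state r x e)) \<partial>step_clocks)
      = (\<integral>\<^sup>+e. (\<Sum>y\<in>?A. ennreal (h y) * ?D y e) \<partial>step_clocks)"
  proof (rule nn_integral_cong)
    fix e :: "'s \<Rightarrow> real"
    have "(\<Sum>y\<in>?A. ennreal (h y) * ?D y e)
        = (\<Sum>y\<in>?A. if y = next_state r x e then ennreal (h y) * ennreal (exp (- s * hold r x e)) else 0)"
      by (intro sum.cong) (auto split: split_indicator)
    also have "\<dots> = ennreal (h (next_state r x e)) * ennreal (exp (- s * hold r x e))"
      using next_state_in_active[OF ne, of e] by (simp add: sum.delta')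
    finally show "ennreal (exp (- s * hold r x e) * h (next_state r x e)) = (\<Sum>y\<in>?A. ennreal (h y) * ?D y e)"
      using h by (simp add: ennreal_mult' mult.commute)
  qed
  also have "\<dots> = (\<Sum>y\<in>?A. ennreal (h y) * (\<integral>\<^sup>+e. ?D y e \<partial>step_clocks))"
    by (subst nn_integral_sum) (auto intro!: sum.cong nn_integral_cmult)
  also have "\<dots> = (\<Sum>y\<in>?A. ennreal (h y * (r x y / (?q + s))))"
  proof (intro sum.cong refl)
    fix y assume "y \<in> ?A"
    from laplace_hold_next_state[OF rnn this s] rnn s h
    show "ennreal (h y) * (\<integral>\<^sup>+e. ?D y e \<partial>step_clocks) = ennreal (h y * (r x y / (?q + s)))"
      by (simp add: ennreal_mult'[symmetric])
  qed
  also have "\<dots> = ennreal (\<Sum>y\<in>?A. h y * (r x y / (?q + s)))"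
    using h rnn s by (intro sum_ennreal) (auto intro!: mult_nonneg_nonneg divide_nonneg_nonneg sum_nonneg add_nonneg_nonneg)
  also have "(\<Sum>y\<in>?A. h y * (r x y / (?q + s))) = offdiag_sum x (r x) h / (offdiag_sum x (r x) (\<lambda>_. 1) + s)"
    unfolding offdiag_sum_active[of r x, OF rnn] by (simp add: sum_divide_distrib mult.commute)
  finally show ?thesis .
qed

section \<open>First-step equations\<close>

lemma measurable_jump_chain[measurable]:
  fixes r :: "'s::finite \<Rightarrow> 's \<Rightarrow> real"
  shows "(\<lambda>\<omega>. jump_chain r x0 \<omega> n) \<in> measurable clock_space (count_space UNIV)"
proof (induction n)
  case (Suc n)
  have "(\<lambda>\<omega>. next_state r i (\<omega> n)) \<in> measurable clock_space (count_space UNIV)" for i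
    unfolding clock_space_def by (rule measurable_compose[OF _ measurable_next_state]) simp
  then have "(\<lambda>\<omega>. (\<lambda>i \<omega>. next_state r i (\<omega> n)) (jump_chain r x0 \<omega> n) \<omega>)
               \<in> measurable clock_space (count_space UNIV)"
    by (rule measurable_compose_countable[OF _ Suc])
  then show ?case by simp
qed simp

lemma measurable_jump_time[measurable]:
  fixes r :: "'s::finite \<Rightarrow> 's \<Rightarrow> real"
  shows "(\<lambda>\<omega>. jump_time r x0 \<omega> n) \<in> borel_measurable clock_space"
  unfolding jump_time_def
proof (rule borel_measurable_sum)
  fix k
  have "(\<lambda>\<omega>. hold r i (\<omega> k)) \<in> borel_measurable clock_space" for i
    unfolding clock_space_def by (rule measurable_compose[OF _ measurable_hold]) simp
  then show "(\<lambda>\<omega>. hold r (jump_chain r x0 \<omega> k) (\<omega> k)) \<in> borel_measurable clock_space"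
    by (rule measurable_compose_countable[OF _ measurable_jump_chain])
qed

lemma measurable_hit_index[measurable]:
  fixes r :: "'s::finite \<Rightarrow> 's \<Rightarrow> real"
  shows "hit_index r x0 A \<in> measurable clock_space (count_space UNIV)"
  unfolding hit_index_def[abs_def] by measurable

lemma measurable_hit_time[measurable]:
  fixes r :: "'s::finite \<Rightarrow> 's \<Rightarrow> real"
  shows "hit_time r x0 A \<in> borel_measurable clock_space"
  unfolding hit_time_def[abs_def]
  by (rule measurable_compose_countable[OF measurable_jump_time measurable_hit_index])

definition hit_discount :: "('s \<Rightarrow> 's \<Rightarrow> real) \<Rightarrow> 's \<Rightarrow> 's set \<Rightarrow> real \<Rightarrow> (nat \<Rightarrow> 's \<Rightarrow> real) \<Rightarrow> real"
  where "hit_discount r x A s \<omega> = (if hits r x A \<omega> then exp (- s * hit_time r x A \<omega>) else 0)"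

definition hit_power :: "('s \<Rightarrow> 's \<Rightarrow> real) \<Rightarrow> 's \<Rightarrow> 's set \<Rightarrow> real \<Rightarrow> (nat \<Rightarrow> 's \<Rightarrow> real) \<Rightarrow> real"
  where "hit_power r x A z \<omega> = (if hits r x A \<omega> then z ^ hit_index r x A \<omega> else 0)"

lemma measurable_hit_discount[measurable]:
  fixes r :: "'s::finite \<Rightarrow> 's \<Rightarrow> real"
  shows "hit_discount r x A s \<in> borel_measurable clock_space"
  unfolding hit_discount_def[abs_def] hits_def by measurable

lemma measurable_hit_power[measurable]:
  fixes r :: "'s::finite \<Rightarrow> 's \<Rightarrow> real"
  shows "hit_power r x A z \<in> borel_measurable clock_space"
  unfolding hit_power_def[abs_def] hits_def by measurable

lemma jump_chain_case_nat_Suc: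
  "jump_chain r x0 (case_nat e \<omega>) (Suc n) = jump_chain r (next_state r x0 e) \<omega> n"
  by (induction n) auto

lemma hits_case_nat:
  "x0 \<notin> A \<Longrightarrow> hits r x0 A (case_nat e \<omega>) \<longleftrightarrow> hits r (next_state r x0 e) A \<omega>"
  unfolding hits_def by (metis jump_chain_case_nat_Suc jump_chain.simps(1) not0_implies_Suc)

lemma hit_index_case_nat:
  assumes "x0 \<notin> A" and "hits r (next_state r x0 e) A \<omega>"
  shows "hit_index r x0 A (case_nat e \<omega>) = Suc (hit_index r (next_state r x0 e) A \<omega>)"
proof -
  obtain n where "jump_chain r (next_state r x0 e) \<omega> n \<in> A" using assms(2) by (auto simp: hits_def)
  then show ?thesis
    unfolding hit_index_def using assms(1)
    by (subst Least_Suc[where n = "Suc n"])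
       (auto simp: jump_chain_case_nat_Suc simp del: jump_chain.simps(2))
qed

lemma jump_time_case_nat_Suc:
  "jump_time r x0 (case_nat e \<omega>) (Suc n) = hold r x0 e + jump_time r (next_state r x0 e) \<omega> n"
  unfolding jump_time_def
  by (subst sum.lessThan_Suc_shift) (simp add: jump_chain_case_nat_Suc del: jump_chain.simps(2))

lemma hit_discount_case_nat:
  "x0 \<notin> A \<Longrightarrow> hit_discount r x0 A s (case_nat e \<omega>)
     = exp (- s * hold r x0 e) * hit_discount r (next_state r x0 e) A s \<omega>"
  unfolding hit_discount_def hit_time_def
  by (auto simp: hits_case_nat hit_index_case_nat jump_time_case_nat_Suc distrib_left mult_exp_exp)

lemma hit_power_case_nat:
  "x0 \<notin> A \<Longrightarrow> hit_power r x0 A z (case_nat e \<omega>) = z * hit_power r (next_state r x0 e) A z \<omega>"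
  unfolding hit_power_def by (auto simp: hits_case_nat hit_index_case_nat)

lemma nn_integral_clock_space_case_nat:
  assumes [measurable]: "G \<in> borel_measurable clock_space"
  shows "(\<integral>\<^sup>+\<omega>. G \<omega> \<partial>clock_space)
         = (\<integral>\<^sup>+e. (\<integral>\<^sup>+\<omega>. G (case_nat e \<omega>) \<partial>clock_space) \<partial>(step_clocks :: ('s \<Rightarrow> real) measure))"
proof -
  interpret S: sequence_space "step_clocks :: ('s \<Rightarrow> real) measure"
    by (simp add: sequence_space_def product_prob_space_def product_prob_space_axioms_def
        product_sigma_finite_def prob_space_step_clocks prob_space_imp_sigma_finite)
  have cs: "clock_space = S.S" by (simp add: clock_space_def)
  have [measurable]: "(\<lambda>(e, \<omega>). case_nat e \<omega>) \<in> measurable (step_clocks \<Otimes>\<^sub>M S.S) S.S"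
    using measurable_case_nat'[of fst "step_clocks \<Otimes>\<^sub>M S.S" step_clocks snd] by (simp add: split_beta')
  have "(\<integral>\<^sup>+\<omega>. G \<omega> \<partial>S.S) = (\<integral>\<^sup>+\<omega>. G \<omega> \<partial>distr (step_clocks \<Otimes>\<^sub>M S.S) S.S (\<lambda>(e, \<omega>). case_nat e \<omega>))"
    by (simp add: S.PiM_iter)
  also have "\<dots> = (\<integral>\<^sup>+p. G (case_nat (fst p) (snd p)) \<partial>(step_clocks \<Otimes>\<^sub>M S.S))"
    using assms by (subst nn_integral_distr) (simp_all add: split_beta' cs)
  also have "\<dots> = (\<integral>\<^sup>+e. (\<integral>\<^sup>+\<omega>. G (case_nat e \<omega>) \<partial>S.S) \<partial>step_clocks)"
    using assms by (subst S.P.nn_integral_fst[symmetric]) (simp_all add: cs)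
  finally show ?thesis unfolding cs .
qed

lemma jump_time_nonneg:
  fixes r :: "'s::finite \<Rightarrow> 's \<Rightarrow> real"
  assumes "\<forall>n z. 0 \<le> \<omega> n z" and "\<forall>x. active r x \<noteq> {}"
  shows "0 \<le> jump_time r x0 \<omega> n"
  unfolding jump_time_def using assms by (intro sum_nonneg hold_nonneg) auto

lemma nn_integral_hit_discount:
  fixes r :: "'s::finite \<Rightarrow> 's \<Rightarrow> real"
  assumes "\<forall>x. active r x \<noteq> {}" and "0 \<le> s"
  shows "(\<integral>\<^sup>+\<omega>. ennreal (hit_discount r x A s \<omega>) \<partial>clock_space) = ennreal (hit_laplace r x A s)"
proof -
  interpret prob_space clock_space by (rule prob_space_clock_space)
  have "AE \<omega> in clock_space. hit_discount r x A s \<omega> \<le> 1"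
    using AE_clock_space_nonneg
  proof eventually_elim
    fix \<omega> :: "nat \<Rightarrow> 's \<Rightarrow> real" assume "\<forall>n z. 0 \<le> \<omega> n z"
    then have "0 \<le> hit_time r x A \<omega>"
      unfolding hit_time_def using assms(1) by (intro jump_time_nonneg) auto
    then show "hit_discount r x A s \<omega> \<le> 1"
      using assms(2) by (auto simp: hit_discount_def mult_nonneg_nonneg)
  qed
  then have "integrable clock_space (hit_discount r x A s)"
    by (intro integrable_const_bound[where B = 1]) (auto simp: hit_discount_def)
  then have "(\<integral>\<^sup>+\<omega>. ennreal (hit_discount r x A s \<omega>) \<partial>clock_space)
      = ennreal (integral\<^sup>L clock_space (hit_discount r x A s))"
    by (rule nn_integral_eq_integral) (simp add: hit_discount_def)
  then show ?thesis unfolding hit_laplace_def hit_discount_def[abs_def] .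
qed

lemma nn_integral_hit_power:
  fixes r :: "'s::finite \<Rightarrow> 's \<Rightarrow> real"
  assumes "0 \<le> z" and "z \<le> 1"
  shows "(\<integral>\<^sup>+\<omega>. ennreal (hit_power r x A z \<omega>) \<partial>clock_space) = ennreal (hit_pgf r x A z)"
proof -
  interpret prob_space clock_space by (rule prob_space_clock_space)
  have "integrable clock_space (hit_power r x A z)"
    using assms by (intro integrable_const_bound[where B = 1]) (auto simp: hit_power_def power_le_one)
  then have "(\<integral>\<^sup>+\<omega>. ennreal (hit_power r x A z \<omega>) \<partial>clock_space)
      = ennreal (integral\<^sup>L clock_space (hit_power r x A z))"
    by (rule nn_integral_eq_integral) (use assms in \<open>simp add: hit_power_def\<close>)
  then show ?thesis unfolding hit_pgf_def hit_power_def[abs_def] .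
qed

lemma hit_laplace_nonneg: "0 \<le> hit_laplace r x A s"
  unfolding hit_laplace_def by (rule integral_nonneg_AE) auto

lemma hit_pgf_nonneg: "0 \<le> z \<Longrightarrow> 0 \<le> hit_pgf r x A z"
  unfolding hit_pgf_def by (rule integral_nonneg_AE) auto

lemma hits_start_in: "x \<in> A \<Longrightarrow> hits r x A \<omega> \<and> hit_index r x A \<omega> = 0"
  by (auto simp: hits_def hit_index_def intro!: exI[where x = 0])

lemma hit_laplace_start_in: "x \<in> A \<Longrightarrow> hit_laplace r x A s = 1"
  using prob_space.prob_space[OF prob_space_clock_space]
  by (simp add: hit_laplace_def hit_time_def hits_start_in jump_time_def)

lemma hit_pgf_start_in: "x \<in> A \<Longrightarrow> hit_pgf r x A z = 1"
  using prob_space.prob_space[OF prob_space_clock_space]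
  by (simp add: hit_pgf_def hits_start_in)

lemma hit_laplace_first_step:
  fixes r :: "'s::finite \<Rightarrow> 's \<Rightarrow> real"
  assumes rnn: "\<And>x y. 0 \<le> r x y" and ne: "\<forall>x. active r x \<noteq> {}" and s: "0 \<le> s" and "x \<notin> A"
  shows "hit_laplace r x A s
         = offdiag_sum x (r x) (\<lambda>y. hit_laplace r y A s) / (offdiag_sum x (r x) (\<lambda>_. 1) + s)"
proof -
  let ?H = "\<lambda>y. hit_laplace r y A s"
  have "ennreal (?H x) = (\<integral>\<^sup>+\<omega>. ennreal (hit_discount r x A s \<omega>) \<partial>clock_space)"
    by (rule nn_integral_hit_discount[OF ne s, symmetric])
  also have "\<dots> = (\<integral>\<^sup>+e. (\<integral>\<^sup>+\<omega>. ennreal (hit_discount r x A s (case_nat e \<omega>)) \<partial>clock_space)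
                     \<partial>(step_clocks :: ('s \<Rightarrow> real) measure))"
    by (rule nn_integral_clock_space_case_nat) simp
  also have "\<dots> = (\<integral>\<^sup>+e. ennreal (exp (- s * hold r x e) * ?H (next_state r x e)) \<partial>step_clocks)"
    using \<open>x \<notin> A\<close>
    by (intro nn_integral_cong)
       (simp add: hit_discount_case_nat ennreal_mult' nn_integral_cmult nn_integral_hit_discount[OF ne s])
  also have "\<dots> = ennreal (offdiag_sum x (r x) ?H / (offdiag_sum x (r x) (\<lambda>_. 1) + s))"
    using ne s by (intro nn_integral_hold_next_state rnn hit_laplace_nonneg) auto
  finally show ?thesis
    using hit_laplace_nonneg s
    by (subst (asm) ennreal_inj)
       (auto intro!: divide_nonneg_nonneg add_nonneg_nonneg offdiag_sum_nonneg rnn)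
qed

lemma hit_pgf_first_step:
  fixes r :: "'s::finite \<Rightarrow> 's \<Rightarrow> real"
  assumes rnn: "\<And>x y. 0 \<le> r x y" and ne: "\<forall>x. active r x \<noteq> {}"
    and z: "0 \<le> z" "z \<le> 1" and "x \<notin> A"
  shows "hit_pgf r x A z = z * (offdiag_sum x (r x) (\<lambda>y. hit_pgf r y A z) / offdiag_sum x (r x) (\<lambda>_. 1))"
proof -
  let ?H = "\<lambda>y. hit_pgf r y A z"
  have "ennreal (?H x) = (\<integral>\<^sup>+\<omega>. ennreal (hit_power r x A z \<omega>) \<partial>clock_space)"
    by (rule nn_integral_hit_power[OF z, symmetric])
  also have "\<dots> = (\<integral>\<^sup>+e. (\<integral>\<^sup>+\<omega>. ennreal (hit_power r x A z (case_nat e \<omega>)) \<partial>clock_space)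
                     \<partial>(step_clocks :: ('s \<Rightarrow> real) measure))"
    by (rule nn_integral_clock_space_case_nat) simp
  also have "\<dots> = ennreal z * (\<integral>\<^sup>+e. ennreal (exp (- 0 * hold r x e) * ?H (next_state r x e)) \<partial>step_clocks)"
    using \<open>x \<notin> A\<close> z
    by (subst nn_integral_cmult[symmetric])
       (simp_all add: hit_power_case_nat ennreal_mult' nn_integral_cmult nn_integral_hit_power)
  also have "\<dots> = ennreal z * ennreal (offdiag_sum x (r x) ?H / (offdiag_sum x (r x) (\<lambda>_. 1) + 0))"
    using ne z by (subst nn_integral_hold_next_state) (auto intro!: rnn hit_pgf_nonneg)
  also have "\<dots> = ennreal (z * (offdiag_sum x (r x) ?H / offdiag_sum x (r x) (\<lambda>_. 1)))"
    using z by (simp add: ennreal_mult'[symmetric])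
  finally show ?thesis
    using hit_pgf_nonneg[OF z(1)] z
    by (subst (asm) ennreal_inj)
       (auto intro!: mult_nonneg_nonneg divide_nonneg_nonneg offdiag_sum_nonneg rnn hit_pgf_nonneg)
qed

lemma hit_pgf_double_minus_le_one:
  fixes r :: "'s::finite \<Rightarrow> 's \<Rightarrow> real"
  assumes z: "0 \<le> z1" "z1 \<le> 1" "z1\<^sup>2 \<le> z2" "z2 \<le> 1"
  shows "2 * hit_pgf r x A z1 - hit_pgf r x A z2 \<le> 1"
proof -
  interpret prob_space clock_space by (rule prob_space_clock_space)
  have "0 \<le> z2" using z by (meson order.trans zero_le_power2)
  have int: "integrable clock_space (hit_power r x A z)" if "0 \<le> z" "z \<le> 1" for z
    using that by (intro integrable_const_bound[where B = 1]) (auto simp: hit_power_def power_le_one)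
  have pointwise: "2 * hit_power r x A z1 \<omega> - hit_power r x A z2 \<omega> \<le> 1" for \<omega>
  proof (cases "hits r x A \<omega>")
    case True
    define n where "n = hit_index r x A \<omega>"
    have "(z1 ^ n)\<^sup>2 = (z1\<^sup>2) ^ n" by (metis power_mult mult.commute)
    also have "\<dots> \<le> z2 ^ n" using z by (intro power_mono) auto
    finally have "(z1 ^ n)\<^sup>2 \<le> z2 ^ n" .
    moreover have "2 * z1 ^ n - (z1 ^ n)\<^sup>2 \<le> 1"
      using zero_le_power2[of "z1 ^ n - 1"] unfolding power2_diff by simp
    ultimately show ?thesis using True by (simp add: hit_power_def n_def[symmetric])
  qed (simp add: hit_power_def)
  have "(\<integral>\<omega>. 2 * hit_power r x A z1 \<omega> - hit_power r x A z2 \<omega> \<partial>clock_space) \<le> (\<integral>\<omega>. 1 \<partial>(clock_space :: (nat \<Rightarrow> 's \<Rightarrow> real) measure))"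
    by (rule integral_mono) (use int[OF z(1,2)] int[OF \<open>0 \<le> z2\<close> z(4)] pointwise in auto)
  then show ?thesis
    using int[OF z(1,2)] int[OF \<open>0 \<le> z2\<close> z(4)]
    by (simp add: hit_pgf_def hit_power_def[symmetric] prob_space.prob_space[OF prob_space_clock_space])
qed

text \<open>Maximum principle: at a state where \<open>\<bar>f\<^sub>1 - f\<^sub>2\<bar>\<close> is maximal, the equation
  \<open>f x = c x * offdiag_sum x (r x) f\<close> would contract that maximum.\<close>

lemma first_step_solution_unique:
  fixes r :: "'s::finite \<Rightarrow> 's \<Rightarrow> real"
  assumes rnn: "\<And>x y. 0 \<le> r x y"
    and closed: "\<And>x y. x \<in> S - A \<Longrightarrow> y \<noteq> x \<Longrightarrow> r x y \<noteq> 0 \<Longrightarrow> y \<in> S"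
    and boundary: "\<And>x. x \<in> S \<inter> A \<Longrightarrow> f1 x = f2 x"
    and eq1: "\<And>x. x \<in> S - A \<Longrightarrow> f1 x = c x * offdiag_sum x (r x) f1"
    and eq2: "\<And>x. x \<in> S - A \<Longrightarrow> f2 x = c x * offdiag_sum x (r x) f2"
    and c: "\<And>x. x \<in> S - A \<Longrightarrow> 0 \<le> c x \<and> c x * offdiag_sum x (r x) (\<lambda>_. 1) < 1"
    and "x \<in> S"
  shows "f1 x = f2 x"
proof (rule ccontr)
  assume "f1 x \<noteq> f2 x"
  define d where "d x = \<bar>f1 x - f2 x\<bar>" for x
  define m where "m = Max (d ` S)"
  have dm: "\<And>x. x \<in> S \<Longrightarrow> d x \<le> m" unfolding m_def by simp
  have "m \<in> d ` S" unfolding m_def using \<open>x \<in> S\<close> by (intro Max_in) auto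
  then obtain x0 where x0: "x0 \<in> S" "d x0 = m" by auto
  have "m > 0"
    using dm[OF \<open>x \<in> S\<close>] \<open>f1 x \<noteq> f2 x\<close> by (simp add: d_def)
  have x0A: "x0 \<notin> A" using boundary x0 \<open>m > 0\<close> by (auto simp: d_def)
  have "f1 x0 - f2 x0 = c x0 * offdiag_sum x0 (r x0) (\<lambda>y. f1 y - f2 y)"
    using eq1[of x0] eq2[of x0] x0 x0A by (simp add: offdiag_sum_diff right_diff_distrib)
  then have "m = c x0 * \<bar>offdiag_sum x0 (r x0) (\<lambda>y. f1 y - f2 y)\<bar>"
    using c[of x0] x0 x0A by (simp add: d_def abs_mult)
  also have "\<dots> \<le> c x0 * offdiag_sum x0 (r x0) (\<lambda>_. m)"
  proof (intro mult_left_mono)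
    show "\<bar>offdiag_sum x0 (r x0) (\<lambda>y. f1 y - f2 y)\<bar> \<le> offdiag_sum x0 (r x0) (\<lambda>_. m)"
      unfolding offdiag_sum_def
    proof (rule order.trans[OF sum_abs], rule sum_mono)
      fix y
      show "\<bar>if y = x0 then 0 else r x0 y * (f1 y - f2 y)\<bar> \<le> (if y = x0 then 0 else r x0 y * m)"
      proof (cases "y = x0 \<or> r x0 y = 0")
        case False
        then have "\<bar>f1 y - f2 y\<bar> \<le> m" using closed[of x0 y] x0 x0A dm by (auto simp: d_def)
        then show ?thesis using False rnn[of x0 y] by (auto simp: abs_mult intro: mult_left_mono)
      qed auto
    qed
  qed (use c[of x0] x0 x0A in auto)
  also have "offdiag_sum x0 (r x0) (\<lambda>_. m) = offdiag_sum x0 (r x0) (\<lambda>_. 1) * m"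
    unfolding offdiag_sum_def sum_distrib_right by (rule sum.cong) auto
  also have "c x0 * (offdiag_sum x0 (r x0) (\<lambda>_. 1) * m) < m"
    using c[of x0] x0 x0A \<open>m > 0\<close> by (simp add: mult.assoc[symmetric])
  finally show False by simp
qed

section \<open>The meeting generating function of two walkers\<close>

lemma sum_if_eq_neq:
  "(\<Sum>y\<in>(UNIV::'s::finite set). if y = a \<and> y \<noteq> x then f y else 0) = (if a = x then 0 else f a)"
proof -
  have "(\<Sum>y\<in>(UNIV::'s set). if y = a \<and> y \<noteq> x then f y else 0)
      = (\<Sum>y\<in>UNIV. if y = a then (if a = x then 0 else f a) else 0)"
    by (rule sum.cong) auto
  then show ?thesis by simp
qed

lemma offdiag_sum_add:
  "offdiag_sum x (\<lambda>y. \<rho> y + \<sigma> y) h = offdiag_sum x \<rho> h + offdiag_sum x \<sigma> h"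
  unfolding offdiag_sum_def by (simp add: sum.distrib[symmetric] distrib_right if_distrib cong: if_cong)

lemma offdiag_sum_family:
  assumes "finite W"
  shows "offdiag_sum x (\<lambda>y. \<Sum>w\<in>W. if y = t w then c w else 0) h
         = (\<Sum>w\<in>W. if t w = x then 0 else c w * h (t w))"
proof -
  have "offdiag_sum x (\<lambda>y. \<Sum>w\<in>W. if y = t w then c w else 0) h
      = (\<Sum>y\<in>UNIV. \<Sum>w\<in>W. if y = t w \<and> y \<noteq> x then c w * h y else 0)"
    unfolding offdiag_sum_def
    by (intro sum.cong refl) (auto simp: sum_distrib_right intro!: sum.cong)
  also have "\<dots> = (\<Sum>w\<in>W. \<Sum>y\<in>UNIV. if y = t w \<and> y \<noteq> x then c w * h y else 0)"
    by (rule sum.swap)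
  also have "\<dots> = (\<Sum>w\<in>W. if t w = x then 0 else c w * h (t w))"
    by (intro sum.cong refl) (rule sum_if_eq_neq)
  finally show ?thesis .
qed

lemma offdiag_sum_single:
  "offdiag_sum x (\<lambda>y. if P \<and> y = t then c else 0) h = (if P \<and> t \<noteq> x then c * h t else 0)"
proof -
  have "offdiag_sum x (\<lambda>y. if P \<and> y = t then c else 0) h
      = (\<Sum>y\<in>UNIV. if y = t \<and> y \<noteq> x then (if P then c * h y else 0) else 0)"
    unfolding offdiag_sum_def by (rule sum.cong) auto
  then show ?thesis by (simp add: sum_if_eq_neq)
qed

locale edge_transitive_walks =
  fixes Adj :: "'v::finite \<Rightarrow> 'v \<Rightarrow> bool" and lam :: real and u v :: 'v
  assumes simple: "simple_graph Adj" and connected: "graph_connected Adj"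
    and edge_trans: "edge_transitive Adj" and edge_uv: "Adj u v" and lam: "lam > 0"
begin

lemma adj_sym: "Adj a b \<Longrightarrow> Adj b a"
  using simple by (auto simp: simple_graph_def)

lemma adj_irrefl: "\<not> Adj a a"
  using simple by (auto simp: simple_graph_def)

lemma nbrs_nonempty: "nbrs Adj p \<noteq> {}"
proof -
  have "u \<noteq> v" using edge_uv adj_irrefl by auto
  then obtain q where "q \<noteq> p" by metis
  have "Adj\<^sup>*\<^sup>* p q" using connected by (simp add: graph_connected_def)
  then show ?thesis
    using \<open>q \<noteq> p\<close> by (cases rule: converse_rtranclpE) (auto simp: nbrs_def)
qed

lemma deg_pos: "0 < deg Adj p"
  unfolding deg_def using nbrs_nonempty[of p] by (simp add: card_gt_0_iff)

lemma nbrs_neq: "w \<in> nbrs Adj p \<Longrightarrow> w \<noteq> p"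
  using adj_irrefl by (auto simp: nbrs_def)

definition move_sum :: "('v \<times> 'v \<Rightarrow> real) \<Rightarrow> 'v \<Rightarrow> 'v \<Rightarrow> real" where
  "move_sum h p1 p2 = (\<Sum>w\<in>nbrs Adj p1. lam / real (deg Adj p1) * h (w, p2))
                    + (\<Sum>w\<in>nbrs Adj p2. lam / real (deg Adj p2) * h (p1, w))"

lemma move_sum_affine:
  "move_sum (\<lambda>q. a0 + a1 * f q + a2 * h q) p1 p2 = 2 * lam * a0 + a1 * move_sum f p1 p2 + a2 * move_sum h p1 p2"
  unfolding move_sum_def using deg_pos[of p1] deg_pos[of p2]
  by (simp add: distrib_left sum.distrib sum_distrib_left deg_def[symmetric] algebra_simps)

lemma move_sum_const: "move_sum (\<lambda>_. c) p1 p2 = 2 * lam * c"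
  using move_sum_affine[of c 0 "\<lambda>_. 0" 0 "\<lambda>_. 0"] by simp

lemma walk_rate_nonneg: "0 \<le> walk_rate Adj lam x y"
  unfolding walk_rate_def using lam by (auto split: prod.split intro!: add_nonneg_nonneg sum_nonneg)

lemma offdiag_sum_walk_rate: "offdiag_sum (p1, p2) (walk_rate Adj lam (p1, p2)) h = move_sum h p1 p2"
  unfolding walk_rate_def prod.case offdiag_sum_add move_sum_def
  by (simp add: offdiag_sum_family nbrs_neq cong: sum.cong)

lemma active_walk_rate_nonempty: "\<forall>x. active (walk_rate Adj lam) x \<noteq> {}"
proof
  fix x :: "'v \<times> 'v"
  obtain p1 p2 where x: "x = (p1, p2)" by fastforce
  have "0 < offdiag_sum x (walk_rate Adj lam x) (\<lambda>_. 1)"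
    using lam by (simp add: x offdiag_sum_walk_rate move_sum_const)
  then show "active (walk_rate Adj lam) x \<noteq> {}"
    by (rule active_nonempty_of_offdiag_sum[OF walk_rate_nonneg])
qed

definition meet_gf :: "real \<Rightarrow> 'v \<times> 'v \<Rightarrow> real" where
  "meet_gf z p = hit_pgf (walk_rate Adj lam) p meet_set z"

lemma meet_gf_diag: "meet_gf z (p, p) = 1"
  unfolding meet_gf_def by (rule hit_pgf_start_in) (simp add: meet_set_def)

lemma meet_gf_first_step:
  assumes "0 \<le> z" "z \<le> 1" "p1 \<noteq> p2"
  shows "meet_gf z (p1, p2) = z * move_sum (meet_gf z) p1 p2 / (2 * lam)"
  unfolding meet_gf_def using assms
  by (subst hit_pgf_first_step[OF walk_rate_nonneg active_walk_rate_nonempty])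
     (auto simp: meet_set_def offdiag_sum_walk_rate move_sum_const meet_gf_def[abs_def])

lemma meet_gf_unique:
  assumes z: "0 \<le> z" "z < 1"
    and diag: "\<And>p. f (p, p) = 1"
    and first_step: "\<And>p1 p2. p1 \<noteq> p2 \<Longrightarrow> f (p1, p2) = z * move_sum f p1 p2 / (2 * lam)"
  shows "f = meet_gf z"
proof
  fix x :: "'v \<times> 'v"
  show "f x = meet_gf z x"
  proof (rule first_step_solution_unique[where r = "walk_rate Adj lam" and A = meet_set
        and S = UNIV and c = "\<lambda>_. z / (2 * lam)"])
    show "\<And>x. x \<in> UNIV \<inter> meet_set \<Longrightarrow> f x = meet_gf z x"
      by (auto simp: meet_set_def diag meet_gf_diag)
    show "\<And>x. x \<in> UNIV - meet_set \<Longrightarrow> f x = z / (2 * lam) * offdiag_sum x (walk_rate Adj lam x) f"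
      by (auto simp: meet_set_def offdiag_sum_walk_rate first_step)
    show "\<And>x. x \<in> UNIV - meet_set \<Longrightarrow>
            meet_gf z x = z / (2 * lam) * offdiag_sum x (walk_rate Adj lam x) (meet_gf z)"
      using z by (auto simp: meet_set_def offdiag_sum_walk_rate meet_gf_first_step)
    show "\<And>x. x \<in> UNIV - meet_set \<Longrightarrow>
            0 \<le> z / (2 * lam) \<and> z / (2 * lam) * offdiag_sum x (walk_rate Adj lam x) (\<lambda>_. 1) < 1"
      using z lam by (auto simp: offdiag_sum_walk_rate move_sum_const)
  qed (auto simp: walk_rate_nonneg)
qed

lemma meet_gf_swap:
  assumes "0 \<le> z" "z < 1"
  shows "meet_gf z (p2, p1) = meet_gf z (p1, p2)"
proof -
  have "(\<lambda>(a, b). meet_gf z (b, a)) = meet_gf z"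
    using assms
    by (intro meet_gf_unique) (simp_all add: meet_gf_diag meet_gf_first_step move_sum_def add.commute)
  then show ?thesis by (metis case_prod_conv)
qed

lemma nbrs_automorphism:
  assumes "graph_automorphism Adj \<sigma>"
  shows "nbrs Adj (\<sigma> p) = \<sigma> ` nbrs Adj p" and "deg Adj (\<sigma> p) = deg Adj p"
proof -
  have bij: "bij \<sigma>" and adj: "\<And>x y. Adj (\<sigma> x) (\<sigma> y) \<longleftrightarrow> Adj x y"
    using assms by (auto simp: graph_automorphism_def)
  show nb: "nbrs Adj (\<sigma> p) = \<sigma> ` nbrs Adj p"
  proof (rule set_eqI)
    fix w
    obtain w' where "w = \<sigma> w'" using bij by (metis bij_pointE)
    then show "w \<in> nbrs Adj (\<sigma> p) \<longleftrightarrow> w \<in> \<sigma> ` nbrs Adj p"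
      using bij_is_inj[OF bij] by (auto simp: nbrs_def adj inj_eq)
  qed
  show "deg Adj (\<sigma> p) = deg Adj p"
    unfolding deg_def nb using bij_is_inj[OF bij] by (simp add: card_image inj_on_subset)
qed

lemma meet_gf_automorphism:
  assumes z: "0 \<le> z" "z < 1" and \<sigma>: "graph_automorphism Adj \<sigma>"
  shows "meet_gf z (\<sigma> p1, \<sigma> p2) = meet_gf z (p1, p2)"
proof -
  have inj: "inj \<sigma>" using \<sigma> by (simp add: graph_automorphism_def bij_is_inj)
  have "(\<lambda>(a, b). meet_gf z (\<sigma> a, \<sigma> b)) = meet_gf z"
  proof (rule meet_gf_unique[OF z])
    fix p1 p2 :: 'v assume "p1 \<noteq> p2"
    then have "\<sigma> p1 \<noteq> \<sigma> p2" using inj by (auto simp: inj_eq)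
    then show "(case (p1, p2) of (a, b) \<Rightarrow> meet_gf z (\<sigma> a, \<sigma> b))
             = z * move_sum (\<lambda>(a, b). meet_gf z (\<sigma> a, \<sigma> b)) p1 p2 / (2 * lam)"
      using z inj
      by (simp add: meet_gf_first_step move_sum_def nbrs_automorphism[OF \<sigma>] sum.reindex inj_on_subset)
  qed (simp add: meet_gf_diag)
  then show ?thesis by (metis case_prod_conv)
qed

lemma meet_gf_edge:
  assumes z: "0 \<le> z" "z < 1" and "Adj a b"
  shows "meet_gf z (a, b) = meet_gf z (u, v)"
proof -
  obtain \<sigma> where \<sigma>: "graph_automorphism Adj \<sigma>" "{\<sigma> a, \<sigma> b} = {u, v}"
    using edge_trans \<open>Adj a b\<close> edge_uv unfolding edge_transitive_def by blast
  then have "(\<sigma> a = u \<and> \<sigma> b = v) \<or> (\<sigma> a = v \<and> \<sigma> b = u)"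
    by (auto simp: doubleton_eq_iff)
  then show ?thesis
    using meet_gf_automorphism[OF z \<sigma>(1), of a b] meet_gf_swap[OF z, of u v] by auto
qed

lemma move_sum_meet_gf:
  assumes "p1 \<noteq> p2" "0 < z" "z < 1" "z * k = 2 * lam"
  shows "move_sum (meet_gf z) p1 p2 = k * meet_gf z (p1, p2)"
proof -
  have "meet_gf z (p1, p2) * (2 * lam) = z * move_sum (meet_gf z) p1 p2"
    using meet_gf_first_step[of z p1 p2] assms lam by simp
  then have "2 * lam * move_sum (meet_gf z) p1 p2 = 2 * lam * (k * meet_gf z (p1, p2))"
    using assms(4) by (metis mult.assoc mult.commute)
  then show ?thesis using lam by simp
qed

end

section \<open>The epidemic\<close>

lemma contact_eq:
  "contact (a, b, i, j) = (if a = b \<and> (i \<or> j) then (a, b, True, True) else (a, b, i, j))"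
  by (simp add: contact_def)

lemma contact_idem: "contact (contact y) = contact y"
  by (cases y) (auto simp: contact_eq)

locale sis_epidemic = edge_transitive_walks +
  fixes gam s :: real
  assumes gam: "gam > 0" and s: "s > 0"
begin

abbreviation "R \<equiv> sis_rate Adj lam gam"

lemma sis_rate_nonneg: "0 \<le> R x y"
  unfolding sis_rate_def using lam gam
  by (auto split: prod.split intro!: add_nonneg_nonneg sum_nonneg)

lemma sis_rate_target_contact:
  assumes "R x y \<noteq> 0"
  shows "\<exists>z. y = contact z"
proof (rule ccontr)
  assume "\<not> (\<exists>z. y = contact z)"
  then have "(y = contact z) = False" for z by blast
  then have "R x y = 0" unfolding sis_rate_def by (cases x) simp
  with assms show False by simp
qed

lemma offdiag_sum_sis_rate:
  "offdiag_sum (p1, p2, i1, i2) (R (p1, p2, i1, i2)) h =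
      (\<Sum>w\<in>nbrs Adj p1. lam / real (deg Adj p1) * h (contact (w, p2, i1, i2)))
    + (\<Sum>w\<in>nbrs Adj p2. lam / real (deg Adj p2) * h (contact (p1, w, i1, i2)))
    + (if i1 \<and> contact (p1, p2, False, i2) \<noteq> (p1, p2, i1, i2)
       then gam * h (contact (p1, p2, False, i2)) else 0)
    + (if i2 \<and> contact (p1, p2, i1, False) \<noteq> (p1, p2, i1, i2)
       then gam * h (contact (p1, p2, i1, False)) else 0)"
proof -
  have "contact (w, p2, i1, i2) \<noteq> (p1, p2, i1, i2)" if "w \<in> nbrs Adj p1" for w
    using nbrs_neq[OF that] by (auto simp: contact_eq)
  moreover have "contact (p1, w, i1, i2) \<noteq> (p1, p2, i1, i2)" if "w \<in> nbrs Adj p2" for w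
    using nbrs_neq[OF that] by (auto simp: contact_eq)
  ultimately show ?thesis
    unfolding sis_rate_def prod.case offdiag_sum_add offdiag_sum_single
    by (simp add: offdiag_sum_family cong: sum.cong)
qed

lemma sis_exit_rate:
  "offdiag_sum (p1, p2, i1, i2) (R (p1, p2, i1, i2)) (\<lambda>_. 1) = 2 * lam
    + (if i1 \<and> contact (p1, p2, False, i2) \<noteq> (p1, p2, i1, i2) then gam else 0)
    + (if i2 \<and> contact (p1, p2, i1, False) \<noteq> (p1, p2, i1, i2) then gam else 0)"
  using move_sum_const[of 1 p1 p2] unfolding offdiag_sum_sis_rate move_sum_def by simp

lemma sis_exit_rate_pos: "0 < offdiag_sum x (R x) (\<lambda>_. 1)"
  using lam gam by (cases x) (simp add: sis_exit_rate)

lemma active_sis_rate_nonempty: "\<forall>x. active R x \<noteq> {}"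
  by (intro allI active_nonempty_of_offdiag_sum sis_rate_nonneg sis_exit_rate_pos)

definition z1 :: real where "z1 = 2 * lam / (2 * lam + s + gam)"
definition z2 :: real where "z2 = 2 * lam / (2 * lam + s + 2 * gam)"

lemma z1: "0 < z1" "z1 < 1" using lam gam s by (auto simp: z1_def)
lemma z2: "0 < z2" "z2 < 1" using lam gam s by (auto simp: z2_def)

lemma move_sum_meet_gf_z1:
  "p1 \<noteq> p2 \<Longrightarrow> move_sum (meet_gf z1) p1 p2 = (2 * lam + s + gam) * meet_gf z1 (p1, p2)"
  using z1 lam gam s by (intro move_sum_meet_gf) (auto simp: z1_def)

lemma move_sum_meet_gf_z2:
  "p1 \<noteq> p2 \<Longrightarrow> move_sum (meet_gf z2) p1 p2 = (2 * lam + s + 2 * gam) * meet_gf z2 (p1, p2)"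
  using z2 lam gam s by (intro move_sum_meet_gf) (auto simp: z2_def)

definition laplace_formula :: real where
  "laplace_formula =
    (2 * gam * ((1 - meet_gf z1 (u, v)) / (s + gam) - (1 - meet_gf z2 (u, v)) / (s + 2 * gam)))
    / ((2 * lam + s) / (2 * lam) - 2 * meet_gf z1 (u, v) + meet_gf z2 (u, v))"

text \<open>The ansatz for \<open>E[exp (- s T)]\<close> from a state where both, resp. exactly one, of the agents
  are infected.\<close>

definition both_infected_cand where
  "both_infected_cand p = 2 * gam * ((1 - meet_gf z1 p) / (s + gam) - (1 - meet_gf z2 p) / (s + 2 * gam))
     + (2 * meet_gf z1 p - meet_gf z2 p) * laplace_formula"

definition one_infected_cand where
  "one_infected_cand p = gam * (1 - meet_gf z1 p) / (s + gam) + meet_gf z1 p * laplace_formula"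

definition laplace_cand where
  "laplace_cand y = (case y of (a, b, i, j) \<Rightarrow>
     if \<not> i \<and> \<not> j then 1 else if i \<and> j then both_infected_cand (a, b) else one_infected_cand (a, b))"

lemma both_infected_cand_diag: "both_infected_cand (p, p) = laplace_formula"
  by (simp add: both_infected_cand_def meet_gf_diag)

lemma laplace_cand_contact: "laplace_cand (contact y) = laplace_cand y"
  by (cases y) (auto simp: contact_eq laplace_cand_def both_infected_cand_diag one_infected_cand_def meet_gf_diag)

lemma both_infected_cand_edge: "Adj a b \<Longrightarrow> both_infected_cand (a, b) = both_infected_cand (u, v)"
  unfolding both_infected_cand_def using meet_gf_edge[of z1 a b] meet_gf_edge[of z2 a b] z1 z2 by simp

lemma both_infected_cand_first_step:
  assumes "p1 \<noteq> p2"
  shows "both_infected_cand (p1, p2) * (2 * lam + 2 * gam + s)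
         = move_sum both_infected_cand p1 p2 + 2 * gam * one_infected_cand (p1, p2)"
proof -
  have n: "s + gam \<noteq> 0" "s + 2 * gam \<noteq> 0" using gam s by auto
  have affine: "both_infected_cand = (\<lambda>q. (2 * gam / (s + gam) - 2 * gam / (s + 2 * gam))
      + (2 * laplace_formula - 2 * gam / (s + gam)) * meet_gf z1 q
      + (2 * gam / (s + 2 * gam) - laplace_formula) * meet_gf z2 q)"
    by (rule ext) (simp add: both_infected_cand_def diff_divide_distrib algebra_simps)
  have "move_sum both_infected_cand p1 p2
      = 2 * lam * (2 * gam / (s + gam) - 2 * gam / (s + 2 * gam))
        + (2 * laplace_formula - 2 * gam / (s + gam)) * ((2 * lam + s + gam) * meet_gf z1 (p1, p2))
        + (2 * gam / (s + 2 * gam) - laplace_formula) * ((2 * lam + s + 2 * gam) * meet_gf z2 (p1, p2))"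
    by (subst affine, subst move_sum_affine)
       (simp add: move_sum_meet_gf_z1[OF assms] move_sum_meet_gf_z2[OF assms])
  moreover have "inverse (s + gam) * (s + gam) = 1" "inverse (s + 2 * gam) * (s + 2 * gam) = 1"
    using n by auto
  ultimately show ?thesis
    unfolding both_infected_cand_def one_infected_cand_def divide_inverse by algebra
qed

lemma one_infected_cand_first_step:
  assumes "p1 \<noteq> p2"
  shows "one_infected_cand (p1, p2) * (2 * lam + gam + s) = move_sum one_infected_cand p1 p2 + gam"
proof -
  have n: "s + gam \<noteq> 0" using gam s by auto
  have affine: "one_infected_cand = (\<lambda>q. gam / (s + gam)
      + (laplace_formula - gam / (s + gam)) * meet_gf z1 q + 0 * meet_gf z2 q)"
    by (rule ext) (simp add: one_infected_cand_def diff_divide_distrib algebra_simps)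
  have "move_sum one_infected_cand p1 p2
      = 2 * lam * (gam / (s + gam)) + (laplace_formula - gam / (s + gam)) * ((2 * lam + s + gam) * meet_gf z1 (p1, p2))"
    by (subst affine, subst move_sum_affine) (simp add: move_sum_meet_gf_z1[OF assms])
  moreover have "inverse (s + gam) * (s + gam) = 1"
    using n by auto
  ultimately show ?thesis
    unfolding one_infected_cand_def divide_inverse by algebra
qed

lemma laplace_formula_denominator_pos:
  "0 < (2 * lam + s) / (2 * lam) - 2 * meet_gf z1 (u, v) + meet_gf z2 (u, v)"
proof -
  have "(2 * lam) * (2 * lam + s + 2 * gam) \<le> (2 * lam + s + gam)\<^sup>2"
    using lam gam s by (simp add: power2_eq_square algebra_simps)
  then have "(2 * lam)\<^sup>2 * (2 * lam + s + 2 * gam) \<le> 2 * lam * (2 * lam + s + gam)\<^sup>2"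
    using lam by (simp add: power2_eq_square mult.assoc mult_left_mono)
  then have "z1\<^sup>2 \<le> z2"
    using lam gam s by (simp add: z1_def z2_def power_divide divide_le_eq le_divide_eq field_simps)
  then have "2 * meet_gf z1 (u, v) - meet_gf z2 (u, v) \<le> 1"
    unfolding meet_gf_def using z1 z2 by (intro hit_pgf_double_minus_le_one) auto
  moreover have "(2 * lam + s) / (2 * lam) > 1" using lam s by simp
  ultimately show ?thesis by linarith
qed

text \<open>The first-step equation at a diagonal state with both agents infected; this linear equation
  in \<open>laplace_formula\<close> is where the formula comes from.\<close>

lemma laplace_formula_diag_equation:
  "laplace_formula * (2 * lam + s) = 2 * lam * both_infected_cand (u, v)"
proof -
  define D where "D = (2 * lam + s) / (2 * lam) - 2 * meet_gf z1 (u, v) + meet_gf z2 (u, v)"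
  have "laplace_formula * D = both_infected_cand (u, v) - (2 * meet_gf z1 (u, v) - meet_gf z2 (u, v)) * laplace_formula"
    using laplace_formula_denominator_pos
    by (simp add: laplace_formula_def both_infected_cand_def D_def)
  moreover have "D * (2 * lam) = (2 * lam + s) - 2 * lam * (2 * meet_gf z1 (u, v) - meet_gf z2 (u, v))"
    unfolding D_def using lam by (simp add: field_simps)
  ultimately show ?thesis by algebra
qed

lemma laplace_cand_first_step:
  assumes "contact (p1, p2, i1, i2) = (p1, p2, i1, i2)" and infected: "i1 \<or> i2"
  shows "laplace_cand (p1, p2, i1, i2) * (offdiag_sum (p1, p2, i1, i2) (R (p1, p2, i1, i2)) (\<lambda>_. 1) + s)
         = offdiag_sum (p1, p2, i1, i2) (R (p1, p2, i1, i2)) laplace_cand"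
proof -
  have moves: "offdiag_sum (p1, p2, i1, i2) (R (p1, p2, i1, i2)) laplace_cand
      = move_sum (\<lambda>q. laplace_cand (fst q, snd q, i1, i2)) p1 p2
      + (if i1 \<and> contact (p1, p2, False, i2) \<noteq> (p1, p2, i1, i2) then gam * laplace_cand (p1, p2, False, i2) else 0)
      + (if i2 \<and> contact (p1, p2, i1, False) \<noteq> (p1, p2, i1, i2) then gam * laplace_cand (p1, p2, i1, False) else 0)"
    unfolding offdiag_sum_sis_rate move_sum_def laplace_cand_contact by simp
  show ?thesis
  proof (cases "p1 = p2")
    case True
    with assms(1) infected have "i1" "i2" by (auto simp: contact_eq)
    have "move_sum (\<lambda>q. laplace_cand (fst q, snd q, True, True)) p2 p2 = move_sum (\<lambda>_. both_infected_cand (u, v)) p2 p2"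
      unfolding move_sum_def laplace_cand_def
      by (intro arg_cong2[where f = "(+)"] sum.cong refl)
         (auto simp: nbrs_def both_infected_cand_edge dest: adj_sym)
    with \<open>i1\<close> \<open>i2\<close> True show ?thesis
      using laplace_formula_diag_equation moves
      by (simp add: sis_exit_rate contact_eq move_sum_const laplace_cand_def
          both_infected_cand_diag algebra_simps)
  next
    case False
    show ?thesis
    proof (cases "i1 \<and> i2")
      case True
      then have "(\<lambda>q. laplace_cand (fst q, snd q, i1, i2)) = both_infected_cand"
        by (simp add: laplace_cand_def fun_eq_iff)
      with True False show ?thesis
        using both_infected_cand_first_step[OF False] moves
        by (simp add: sis_exit_rate contact_eq laplace_cand_def algebra_simps)
    next
      case False': False
      then have "(\<lambda>q. laplace_cand (fst q, snd q, i1, i2)) = one_infected_cand"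
        using infected by (auto simp: laplace_cand_def fun_eq_iff)
      with False False' infected show ?thesis
        using one_infected_cand_first_step[OF False] moves
        by (auto simp: sis_exit_rate contact_eq laplace_cand_def algebra_simps)
    qed
  qed
qed

lemma hit_laplace_eq_laplace_cand:
  assumes "contact x = x"
  shows "hit_laplace R x all_susceptible s = laplace_cand x"
proof (rule first_step_solution_unique[where S = "{y. contact y = y}" and A = all_susceptible
      and c = "\<lambda>x. 1 / (offdiag_sum x (R x) (\<lambda>_. 1) + s)"])
  show "y \<in> {y. contact y = y}" if "R x y \<noteq> 0" for x y
    using sis_rate_target_contact[OF that] by (auto simp: contact_idem)
  show "hit_laplace R x all_susceptible s = laplace_cand x" if "x \<in> {y. contact y = y} \<inter> all_susceptible" for x
    using that by (auto simp: hit_laplace_start_in laplace_cand_def all_susceptible_def)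
  show "hit_laplace R x all_susceptible s
        = 1 / (offdiag_sum x (R x) (\<lambda>_. 1) + s) * offdiag_sum x (R x) (\<lambda>y. hit_laplace R y all_susceptible s)"
    if "x \<in> {y. contact y = y} - all_susceptible" for x
    using that s by (subst hit_laplace_first_step[OF sis_rate_nonneg active_sis_rate_nonempty]) auto
  show "laplace_cand x = 1 / (offdiag_sum x (R x) (\<lambda>_. 1) + s) * offdiag_sum x (R x) laplace_cand"
    if "x \<in> {y. contact y = y} - all_susceptible" for x
    using that laplace_cand_first_step[of "fst x" "fst (snd x)" "fst (snd (snd x))" "snd (snd (snd x))"]
      sis_exit_rate_pos[of x] s
    by (cases x) (auto simp: all_susceptible_def field_simps)
  show "0 \<le> 1 / (offdiag_sum x (R x) (\<lambda>_. 1) + s)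
        \<and> 1 / (offdiag_sum x (R x) (\<lambda>_. 1) + s) * offdiag_sum x (R x) (\<lambda>_. 1) < 1" for x
    using sis_exit_rate_pos[of x] s by (simp add: divide_less_eq)
qed (use assms in \<open>auto simp: sis_rate_nonneg\<close>)

lemma sis_laplace_eq_laplace_formula: "sis_laplace Adj lam gam x0 s = laplace_formula"
  unfolding sis_laplace_def
  by (simp add: hit_laplace_eq_laplace_cand contact_eq laplace_cand_def both_infected_cand_diag)

end

theorem corollary1:
  fixes Adj :: "'v::finite \<Rightarrow> 'v \<Rightarrow> bool"
    and lam gam s :: real and x0 u v :: 'v
  assumes "simple_graph Adj" and "graph_connected Adj" and "edge_transitive Adj"
    and "Adj u v"
    and "lam > 0" and "gam > 0" and "s > 0"
  shows "sis_laplace Adj lam gam x0 s =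
    (2 * gam * ((1 - meet_pgf Adj lam u v (2 * lam / (2 * lam + s + gam))) / (s + gam)
              - (1 - meet_pgf Adj lam u v (2 * lam / (2 * lam + s + 2 * gam))) / (s + 2 * gam)))
    / ((2 * lam + s) / (2 * lam)
       - 2 * meet_pgf Adj lam u v (2 * lam / (2 * lam + s + gam))
       + meet_pgf Adj lam u v (2 * lam / (2 * lam + s + 2 * gam)))"
proof -
  interpret sis_epidemic Adj lam u v gam s
    using assms by unfold_locales
  show ?thesis
    using sis_laplace_eq_laplace_formula[of x0]
    unfolding laplace_formula_def z1_def z2_def meet_gf_def meet_pgf_def .
qed

end
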